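(* Let $\sigma_1,\sigma_2$ be real $2\times2$ matrices with positive definite symmetric parts $\Sigma_i=\frac{\sigma_i+\sigma_i^T}2$, and $d_i=\det\Sigma_i$. Set $$m=(\sigma_2)_{11}(\sigma_1)_{22}+(\sigma_1)_{11}(\sigma_2)_{22}-\tfrac12\big((\sigma_2)_{12}+(\sigma_2)_{21}\big)\big((\sigma_1)_{12}+(\sigma_1)_{21}\big),$$ $$n=\frac1{\sqrt{d_1d_2}}\Big[\det\sigma_1+\det\sigma_2-\tfrac12\big((\sigma_1)_{21}-(\sigma_1)_{12}\big)\big((\sigma_2)_{21}-(\sigma_2)_{12}\big)\Big].$$ Then $$K^{min}(\sigma_1,\sigma_2)=\sqrt{\frac{m+\sqrt{m^2-4d_1d_2}}{2\sqrt{d_1d_2}}\cdot\frac{n+\sqrt{n^2-4}}{2}}.$$ If moreover $\sigma_1,\sigma_2$ are symmetric, then $K^{min}(\sigma_1,\sigma_2)=\max\{\lambda_1^{-1/2},\lambda_2^{1/2}\}$, where $\lambda_1\le\lambda_2$ are the eigenvalues of $\sigma_1^{-1/2}\sigma_2\sigma_1^{-1/2}$.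
   Context: For a real $2\times2$ matrix $\sigma$ with positive definite symmetric part $\sigma^S$, set $$G(\sigma)=\frac{1}{\sqrt{\det\sigma^S}}\begin{pmatrix}\sigma_{22}&-\frac{\sigma_{12}+\sigma_{21}}2\\-\frac{\sigma_{12}+\sigma_{21}}2&\sigma_{11}\end{pmatrix},\quad H(\sigma)=\frac{1}{\sqrt{\det\sigma^S}}\begin{pmatrix}\det\sigma&\frac{\sigma_{21}-\sigma_{12}}2\\\frac{\sigma_{21}-\sigma_{12}}2&1\end{pmatrix}.$$ With $G_i=G(\sigma_i)$, $H_i=H(\sigma_i)$, $K^{min}(\sigma_1,\sigma_2):=\min_{A,B\in SL(2)}\max_{i=1,2}\lambda_{\max}(B^TG_iB)\lambda_{\max}(A^TH_iA)$, where $SL(2)$ is the set of real $2\times 2$ matrices of determinant $1$ and $\lambda_{\max}$ the largest eigenvalue. $\sigma_1^{-1/2}$ denotes the positive definite square root of $\sigma_1^{-1}$. *)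

theory Defs
  imports "HOL-Analysis.Analysis"
begin

type_synonym mat2 = "real^2^2"

definition sym_part :: "mat2 \<Rightarrow> mat2" where
  "sym_part \<sigma> = (1/2) *\<^sub>R (\<sigma> + transpose \<sigma>)"

definition pos_def :: "mat2 \<Rightarrow> bool" where
  "pos_def M \<longleftrightarrow> (\<forall>v::real^2. v \<noteq> 0 \<longrightarrow> v \<bullet> (M *v v) > 0)"

definition symmetric_mat :: "mat2 \<Rightarrow> bool" where
  "symmetric_mat M \<longleftrightarrow> transpose M = M"

definition eigenvalues :: "mat2 \<Rightarrow> real set" where
  "eigenvalues M = {c. \<exists>v::real^2. v \<noteq> 0 \<and> M *v v = c *\<^sub>R v}"

definition lambda_max :: "mat2 \<Rightarrow> real" where
  "lambda_max M = Max (eigenvalues M)"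

definition lambda_min :: "mat2 \<Rightarrow> real" where
  "lambda_min M = Min (eigenvalues M)"

definition SL2 :: "mat2 set" where
  "SL2 = {A. det A = 1}"

definition Gmat :: "mat2 \<Rightarrow> mat2" where
  "Gmat \<sigma> = (1 / sqrt (det (sym_part \<sigma>))) *\<^sub>R
     (\<chi> i j. if i = 1 \<and> j = 1 then \<sigma>$2$2
             else if i = 2 \<and> j = 2 then \<sigma>$1$1
             else - (\<sigma>$1$2 + \<sigma>$2$1) / 2)"

definition Hmat :: "mat2 \<Rightarrow> mat2" where
  "Hmat \<sigma> = (1 / sqrt (det (sym_part \<sigma>))) *\<^sub>R
     (\<chi> i j. if i = 1 \<and> j = 1 then det \<sigma>
             else if i = 2 \<and> j = 2 then 1
             else (\<sigma>$2$1 - \<sigma>$1$2) / 2)"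

definition Kvals :: "mat2 \<Rightarrow> mat2 \<Rightarrow> real set" where
  "Kvals \<sigma>1 \<sigma>2 = {max (lambda_max (transpose B ** Gmat \<sigma>1 ** B) * lambda_max (transpose A ** Hmat \<sigma>1 ** A))
                        (lambda_max (transpose B ** Gmat \<sigma>2 ** B) * lambda_max (transpose A ** Hmat \<sigma>2 ** A))
                   | A B. A \<in> SL2 \<and> B \<in> SL2}"

definition Kmin :: "mat2 \<Rightarrow> mat2 \<Rightarrow> real" where
  "Kmin \<sigma>1 \<sigma>2 = Inf (Kvals \<sigma>1 \<sigma>2)"

definition pd_sqrt :: "mat2 \<Rightarrow> mat2" where
  "pd_sqrt M = (THE S. symmetric_mat S \<and> pos_def S \<and> S ** S = M)"

end

theory Submission
  imports Defs
begin

(*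
  Unimodular positive definite symmetric 2x2 matrices form a model of the hyperbolic plane
  (hyp_point).  The polar form of the determinant, hyp_pairing, equals 2 cosh of the hyperbolic
  distance, and exp_dist t = (t + sqrt (t^2 - 4)) / 2 turns it into the exponential of the
  distance.  For B in SL(2) and a hyperbolic point M the congruence B^T M B is again unimodular
  symmetric, so its top eigenvalue is exp_dist of its trace, i.e. exp (dist (weight B, M)) with
  weight B = (B B^T)^-1; conversely every hyperbolic point is a weight.  Since G(sigma_i) and
  H(sigma_i) are hyperbolic points, K^min is a min-max of products of exponentiated distances.
  The triangle inequality (from a Gram determinant identity) gives the lower bound
  sqrt (exp (d (G1, G2)) * exp (d (H1, H2))), attained at the two hyperbolic midpoints.
  Evaluating the two pairings yields the closed form in m and n.  In the symmetric case, an
  explicit square root (Cayley-Hamilton) shows that sigma1^-1/2 sigma2 sigma1^-1/2 has trace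
  m / d1 and determinant d2 / d1, which turns the formula into max (l1^-1/2, l2^1/2).
*)

section \<open>The exponentiated distance function\<close>

text \<open>For \<open>t = 2 cosh \<delta>\<close> with \<open>\<delta> \<ge> 0\<close> this is \<open>e\<^sup>\<delta>\<close>; equivalently, the larger root of
  \<open>r\<^sup>2 - t r + 1\<close>.\<close>
definition exp_dist :: "real \<Rightarrow> real" where
  "exp_dist t = (t + sqrt (t\<^sup>2 - 4)) / 2"

lemma sq_minus_4_nonneg: "t \<ge> 2 \<Longrightarrow> t\<^sup>2 - 4 \<ge> (0::real)"
  using mult_mono[of 2 t 2 t] by (simp add: power2_eq_square)

lemma exp_dist_ge_1:
  assumes "t \<ge> 2" shows "exp_dist t \<ge> 1"
proof -
  have "t + sqrt (t\<^sup>2 - 4) \<ge> 2"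
    using assms real_sqrt_ge_zero[OF sq_minus_4_nonneg[OF assms]] by linarith
  thus ?thesis unfolding exp_dist_def by simp
qed

lemma exp_dist_pos: "t \<ge> 2 \<Longrightarrow> exp_dist t > 0"
  using exp_dist_ge_1 by force

lemma exp_dist_reciprocal:
  assumes "t \<ge> 2" shows "1 / exp_dist t = (t - sqrt (t\<^sup>2 - 4)) / 2"
proof -
  have "(sqrt (t\<^sup>2 - 4))\<^sup>2 = t\<^sup>2 - 4" using sq_minus_4_nonneg[OF assms] by simp
  hence "exp_dist t * ((t - sqrt (t\<^sup>2 - 4)) / 2) = 1"
    unfolding exp_dist_def by (simp add: field_simps power2_eq_square)
  thus ?thesis using exp_dist_pos[OF assms] by (simp add: field_simps)
qed

lemma exp_dist_inverse:
  assumes "p > 0" shows "exp_dist (p + 1/p) = max p (1/p)"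
proof -
  have "(p + 1/p)\<^sup>2 - 4 = (p - 1/p)\<^sup>2" using assms by (simp add: power2_eq_square field_simps)
  thus ?thesis unfolding exp_dist_def by (simp add: max_def abs_if)
qed

lemma exp_dist_inverse_ge_1:
  assumes "r \<ge> 1" shows "exp_dist (r + 1/r) = r"
  using assms exp_dist_inverse[of r] by (simp add: mult_ge1_I mult_imp_div_pos_le)

lemma exp_dist_le:
  assumes t: "t \<ge> 2" and P: "P \<ge> 1" and le: "t \<le> P + 1/P"
  shows "exp_dist t \<le> P"
proof -
  have "P * t \<le> P * (P + 1/P)" using le P by (simp add: mult_left_mono)
  also have "\<dots> = P\<^sup>2 + 1" using P by (simp add: field_simps power2_eq_square)
  finally have Pt: "P * t \<le> P\<^sup>2 + 1" .
  moreover have "P\<^sup>2 \<ge> 1" using P by (simp add: one_le_power)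
  ultimately have "P * (2*P - t) \<ge> 0" by (simp add: power2_eq_square algebra_simps)
  hence "0 \<le> 2*P - t" using P by (simp add: zero_le_mult_iff)
  moreover have "t\<^sup>2 - 4 \<le> (2*P - t)\<^sup>2" using Pt by (simp add: power2_eq_square algebra_simps)
  ultimately have "sqrt (t\<^sup>2 - 4) \<le> 2*P - t" by (rule real_le_lsqrt)
  thus ?thesis unfolding exp_dist_def by simp
qed

text \<open>Addition formula: \<open>e\<^sup>\<alpha> e\<^sup>\<beta> + e\<^sup>-\<^sup>\<alpha> e\<^sup>-\<^sup>\<beta> = 2 cosh(\<alpha>+\<beta>)\<close>, written in terms of
  \<open>a = 2 cosh \<alpha>\<close> and \<open>b = 2 cosh \<beta>\<close>.\<close>
lemma exp_dist_product:
  assumes "a \<ge> 2" "b \<ge> 2"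
  shows "exp_dist a * exp_dist b + 1 / (exp_dist a * exp_dist b)
           = (a*b + sqrt (a\<^sup>2 - 4) * sqrt (b\<^sup>2 - 4)) / 2"
proof -
  have "1 / (exp_dist a * exp_dist b) = (1 / exp_dist a) * (1 / exp_dist b)" by simp
  thus ?thesis unfolding exp_dist_reciprocal[OF assms(1)] exp_dist_reciprocal[OF assms(2)]
    by (simp add: exp_dist_def field_simps)
qed

text \<open>Halving: if \<open>c = 2 cosh \<delta>\<close> then \<open>sqrt (2 + c) = 2 cosh (\<delta>/2)\<close>.\<close>
lemma exp_dist_half:
  assumes c: "c \<ge> 2"
  shows "(exp_dist (sqrt (2 + c)))\<^sup>2 = exp_dist c"
proof -
  define k where "k = sqrt (2 + c)"
  have kk: "k\<^sup>2 = 2 + c" unfolding k_def using c by simp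
  have "k\<^sup>2 - 4 = c - 2" using kk by simp
  hence "(exp_dist k)\<^sup>2 = (k\<^sup>2 + 2 * (k * sqrt (c - 2)) + (c - 2)) / 4"
    unfolding exp_dist_def using c by (simp add: power2_eq_square field_simps)
  moreover have "k * sqrt (c - 2) = sqrt (c\<^sup>2 - 4)"
    unfolding k_def by (simp add: real_sqrt_mult[symmetric] power2_eq_square algebra_simps)
  ultimately have "(exp_dist k)\<^sup>2 = (k\<^sup>2 + 2 * sqrt (c\<^sup>2 - 4) + (c - 2)) / 4" by simp
  thus ?thesis unfolding k_def[symmetric] kk exp_dist_def by (simp add: field_simps)
qed

lemma exp_dist_scaled:
  assumes "d1 > 0" "d2 > (0::real)"
  shows "exp_dist (m / sqrt (d1*d2)) = (m + sqrt (m\<^sup>2 - 4*d1*d2)) / (2 * sqrt (d1*d2))"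
proof -
  define r where "r = sqrt (d1*d2)"
  have r: "r > 0" "r*r = d1*d2" unfolding r_def using assms by auto
  have "(m/r)\<^sup>2 - 4 = (m\<^sup>2 - 4*(r*r)) / (r*r)"
    using r(1) by (simp add: field_simps power2_eq_square)
  hence "(m/r)\<^sup>2 - 4 = (m\<^sup>2 - 4*d1*d2) / (r*r)" using r(2) by simp
  hence "sqrt ((m/r)\<^sup>2 - 4) = sqrt (m\<^sup>2 - 4*d1*d2) / r"
    using r(1) by (simp add: real_sqrt_divide real_sqrt_mult_self)
  thus ?thesis unfolding exp_dist_def r_def[symmetric] using r(1) by (simp add: field_simps)
qed

text \<open>Triangle inequality for \<open>exp_dist\<close>: if \<open>a, b, c \<ge> 2\<close> have nonnegative Gram-type
  determinant \<open>4 + abc - a\<^sup>2 - b\<^sup>2 - c\<^sup>2\<close> (as the pairwise values \<open>2 cosh\<close> of the sides of a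
  hyperbolic triangle do), then \<open>e\<^sup>\<gamma> \<le> e\<^sup>\<alpha> e\<^sup>\<beta>\<close>.\<close>
lemma exp_dist_triangle:
  assumes a: "a \<ge> 2" and b: "b \<ge> 2" and c: "c \<ge> 2"
    and gram: "a\<^sup>2 + b\<^sup>2 + c\<^sup>2 \<le> 4 + a*b*c"
  shows "exp_dist c \<le> exp_dist a * exp_dist b"
proof -
  have roots: "sqrt (a\<^sup>2 - 4) * sqrt (b\<^sup>2 - 4) \<ge> 0"
    using sq_minus_4_nonneg[OF a] sq_minus_4_nonneg[OF b] by simp
  have "2*c \<le> a*b + sqrt (a\<^sup>2 - 4) * sqrt (b\<^sup>2 - 4)"
  proof (cases "2*c \<le> a*b")
    case True
    thus ?thesis using roots by linarith
  next
    case False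
    have "(2*c - a*b)\<^sup>2 \<le> (a\<^sup>2 - 4) * (b\<^sup>2 - 4)"
      using gram by (simp add: power2_eq_square algebra_simps)
    also have "\<dots> = (sqrt (a\<^sup>2 - 4) * sqrt (b\<^sup>2 - 4))\<^sup>2"
      using sq_minus_4_nonneg[OF a] sq_minus_4_nonneg[OF b] by (simp add: power_mult_distrib)
    finally have "2*c - a*b \<le> sqrt (a\<^sup>2 - 4) * sqrt (b\<^sup>2 - 4)"
      using roots by (rule power2_le_imp_le)
    thus ?thesis by simp
  qed
  hence "c \<le> exp_dist a * exp_dist b + 1 / (exp_dist a * exp_dist b)"
    unfolding exp_dist_product[OF a b] by simp
  moreover have "exp_dist a * exp_dist b \<ge> 1"
    using exp_dist_ge_1[OF a] exp_dist_ge_1[OF b] mult_mono[of 1 "exp_dist a" 1 "exp_dist b"] by simp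
  ultimately show ?thesis using c by (intro exp_dist_le)
qed

lemma sqrt_le_max_products:
  fixes p q a1 a2 b1 b2 :: real
  assumes p: "0 \<le> p" "p \<le> a1 * a2" and q: "0 \<le> q" "q \<le> b1 * b2"
    and nonneg: "0 \<le> a1" "0 \<le> a2" "0 \<le> b1" "0 \<le> b2"
  shows "sqrt (p * q) \<le> max (a1 * b1) (a2 * b2)"
proof (rule real_le_lsqrt)
  show max0: "0 \<le> max (a1 * b1) (a2 * b2)"
    using mult_nonneg_nonneg[OF nonneg(1,3)] by (rule max.coboundedI1)
  have "p * q \<le> (a1 * a2) * (b1 * b2)" using p q by (simp add: mult_mono)
  also have "\<dots> = (a1 * b1) * (a2 * b2)" by (simp add: algebra_simps)
  also have "\<dots> \<le> (max (a1 * b1) (a2 * b2))\<^sup>2"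
    unfolding power2_eq_square using max0 nonneg by (intro mult_mono) simp_all
  finally show "p * q \<le> (max (a1 * b1) (a2 * b2))\<^sup>2" .
qed

lemma exp_dist_eigen_formula:
  assumes l1: "0 < l1" and l12: "l1 \<le> l2"
  shows "sqrt (exp_dist ((l1 + l2) / sqrt (l1 * l2)) * exp_dist ((1 + l1 * l2) / sqrt (l1 * l2)))
           = max (1 / sqrt l1) (sqrt l2)"
proof -
  define p1 where "p1 = sqrt l1"
  define p2 where "p2 = sqrt l2"
  have p: "0 < p1" "p1 \<le> p2" "p1 * p1 = l1" "p2 * p2 = l2" "sqrt (l1 * l2) = p1 * p2"
    unfolding p1_def p2_def using l1 l12 by (auto simp: real_sqrt_mult)
  have "(l1 + l2) / sqrt (l1 * l2) = p2 / p1 + 1 / (p2 / p1)"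
    unfolding p(5) unfolding p(3,4)[symmetric] using p(1,2) by (simp add: field_simps)
  hence A: "exp_dist ((l1 + l2) / sqrt (l1 * l2)) = p2 / p1"
    using p(1,2) exp_dist_inverse_ge_1[of "p2 / p1"] by simp
  have "(1 + l1 * l2) / sqrt (l1 * l2) = p1 * p2 + 1 / (p1 * p2)"
    unfolding p(5) unfolding p(3,4)[symmetric] using p(1,2) by (simp add: field_simps)
  hence B: "exp_dist ((1 + l1 * l2) / sqrt (l1 * l2)) = max (p1 * p2) (1 / (p1 * p2))"
    using p(1,2) exp_dist_inverse[of "p1 * p2"] by simp
  have "p2 / p1 * max (p1 * p2) (1 / (p1 * p2)) = max (p2 * p2) (1 / (p1 * p1))"
    using p(1,2) by (simp add: max_mult_distrib_left field_simps)
  also have "\<dots> = max (p2\<^sup>2) ((1 / p1)\<^sup>2)" by (simp add: power2_eq_square)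
  also have "\<dots> = (max p2 (1 / p1))\<^sup>2"
  proof -
    have "0 \<le> p2" "0 \<le> 1 / p1" using p(1,2) by simp_all
    thus ?thesis by (smt (verit, best) power_mono)
  qed
  finally have sq: "exp_dist ((l1 + l2) / sqrt (l1 * l2)) * exp_dist ((1 + l1 * l2) / sqrt (l1 * l2))
                      = (max p2 (1 / p1))\<^sup>2"
    unfolding A B .
  have "0 \<le> max p2 (1 / p1)" using p(1,2) by (simp add: max.coboundedI1)
  thus ?thesis unfolding sq p1_def p2_def by (simp add: max.commute)
qed

section \<open>Two-by-two matrices\<close>

lemmas mat2_simps = matrix_matrix_mult_def matrix_vector_mult_def transpose_def sum_2

lemma vec2_eq_iff: "(v::real^2) = w \<longleftrightarrow> v$1 = w$1 \<and> v$2 = w$2"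
  by (simp add: vec_eq_iff forall_2)

lemma vec2_nonzero_iff: "(v::real^2) \<noteq> 0 \<longleftrightarrow> v$1 \<noteq> 0 \<or> v$2 \<noteq> 0"
  by (simp add: vec2_eq_iff)

lemma mat2_eq_iff:
  "(A::mat2) = B \<longleftrightarrow> A$1$1 = B$1$1 \<and> A$1$2 = B$1$2 \<and> A$2$1 = B$2$1 \<and> A$2$2 = B$2$2"
  by (simp add: vec_eq_iff forall_2)

definition mk2 :: "real \<Rightarrow> real \<Rightarrow> real \<Rightarrow> real \<Rightarrow> mat2" where
  "mk2 a b c d = vector [vector [a, b], vector [c, d]]"

lemma mk2_simps [simp]:
  "mk2 a b c d $1$1 = a" "mk2 a b c d $1$2 = b" "mk2 a b c d $2$1 = c" "mk2 a b c d $2$2 = d"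
  unfolding mk2_def by simp_all

lemma symmetric_mat_iff: "symmetric_mat M \<longleftrightarrow> M$1$2 = M$2$1"
  unfolding symmetric_mat_def mat2_eq_iff by (auto simp: transpose_def)

lemma trace_2: "trace (M::mat2) = M$1$1 + M$2$2"
  by (simp add: trace_def sum_2)

definition adj2 :: "mat2 \<Rightarrow> mat2" where
  "adj2 M = mk2 (M$2$2) (- M$1$2) (- M$2$1) (M$1$1)"

lemma det_adj2 [simp]: "det (adj2 M) = det M"
  unfolding adj2_def det_2 by (simp add: mult.commute)

lemma adj2_adj2 [simp]: "adj2 (adj2 M) = M"
  unfolding adj2_def mat2_eq_iff by simp

lemma mat1_2 [simp]:
  "(mat 1 :: mat2)$1$1 = 1" "(mat 1 :: mat2)$1$2 = 0" "(mat 1 :: mat2)$2$1 = 0" "(mat 1 :: mat2)$2$2 = 1"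
  by (simp_all add: mat_def)

lemma matrix_inv_2:
  assumes "det M \<noteq> 0"
  shows "matrix_inv M = (1 / det M) *\<^sub>R adj2 M"
proof -
  define E where "E = mk2 (M$2$2 / det M) (- M$1$2 / det M) (- M$2$1 / det M) (M$1$1 / det M)"
  have dM: "det M = M$1$1 * M$2$2 - M$1$2 * M$2$1" by (simp add: det_2)
  have E: "M ** E = mat 1" "E ** M = mat 1"
    unfolding E_def mat2_eq_iff using assms
    by (simp_all add: mat2_simps field_simps dM[symmetric])
  hence "\<exists>A'. M ** A' = mat 1 \<and> A' ** M = mat 1" by blast
  hence inv: "M ** matrix_inv M = mat 1 \<and> matrix_inv M ** M = mat 1"
    unfolding matrix_inv_def by (rule someI_ex)
  have "matrix_inv M = matrix_inv M ** (M ** E)" using E(1) by simp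
  also have "\<dots> = (matrix_inv M ** M) ** E" by (simp add: matrix_mul_assoc)
  also have "\<dots> = E" using inv by simp
  finally show ?thesis unfolding E_def adj2_def mat2_eq_iff by simp
qed

lemma eigenvalues_symmetric:
  assumes s: "symmetric_mat M"
  shows "eigenvalues M = {r. r\<^sup>2 - trace M * r + det M = 0}"
proof -
  have s': "M$1$2 = M$2$1" using s by (simp add: symmetric_mat_iff)
  have char: "r\<^sup>2 - trace M * r + det M = (M$1$1 - r) * (M$2$2 - r) - M$1$2 * M$2$1" for r
    by (simp add: trace_2 det_2 power2_eq_square algebra_simps)
  show ?thesis
  proof (intro set_eqI iffI)
    fix r assume "r \<in> eigenvalues M"
    then obtain v :: "real^2" where v: "v \<noteq> 0" "M *v v = r *\<^sub>R v"
      unfolding eigenvalues_def by auto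
    have e1: "(M$1$1 - r) * v$1 + M$1$2 * v$2 = 0" and e2: "M$2$1 * v$1 + (M$2$2 - r) * v$2 = 0"
      using v(2) unfolding vec2_eq_iff by (simp_all add: mat2_simps algebra_simps)
    have "((M$1$1 - r) * (M$2$2 - r) - M$1$2 * M$2$1) * v$1
            = (M$2$2 - r) * ((M$1$1 - r) * v$1 + M$1$2 * v$2) - M$1$2 * (M$2$1 * v$1 + (M$2$2 - r) * v$2)"
      and "((M$1$1 - r) * (M$2$2 - r) - M$1$2 * M$2$1) * v$2
            = (M$1$1 - r) * (M$2$1 * v$1 + (M$2$2 - r) * v$2) - M$2$1 * ((M$1$1 - r) * v$1 + M$1$2 * v$2)"
      by (simp_all add: algebra_simps)
    hence "(M$1$1 - r) * (M$2$2 - r) - M$1$2 * M$2$1 = 0"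
      using e1 e2 v(1) unfolding vec2_nonzero_iff by auto
    thus "r \<in> {r. r\<^sup>2 - trace M * r + det M = 0}" by (simp add: char)
  next
    fix r assume "r \<in> {r. r\<^sup>2 - trace M * r + det M = 0}"
    hence p: "(M$1$1 - r) * (M$2$2 - r) - M$1$2 * M$2$1 = 0" by (simp add: char)
    txt \<open>An eigenvector: the first basis vector if \<open>M\<close> is diagonal with \<open>M$1$1 = r\<close>,
      otherwise a vector orthogonal to the first row of \<open>M - r I\<close>.\<close>
    define v :: "real^2" where
      "v = (if M$1$2 = 0 \<and> r = M$1$1 then vector [1, 0] else vector [M$1$2, r - M$1$1])"
    have "v \<noteq> 0" unfolding v_def by (auto simp: vec2_nonzero_iff)
    moreover have "M *v v = r *\<^sub>R v"
      unfolding v_def using p s' by (auto simp: vec2_eq_iff mat2_simps algebra_simps)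
    ultimately show "r \<in> eigenvalues M" unfolding eigenvalues_def by blast
  qed
qed

lemma lambda_symmetric:
  assumes s: "symmetric_mat M"
  defines "q \<equiv> sqrt ((trace M)\<^sup>2 - 4 * det M)"
  shows "lambda_max M = (trace M + q) / 2" and "lambda_min M = (trace M - q) / 2"
    and "lambda_min M + lambda_max M = trace M" and "lambda_min M * lambda_max M = det M"
    and "lambda_min M \<le> lambda_max M"
proof -
  have "(trace M)\<^sup>2 - 4 * det M = (M$1$1 - M$2$2)\<^sup>2 + 4 * (M$1$2)\<^sup>2"
    using s by (simp add: symmetric_mat_iff trace_2 det_2 power2_eq_square algebra_simps)
  hence "(trace M)\<^sup>2 - 4 * det M \<ge> 0" by simp
  hence qq: "q * q = (trace M)\<^sup>2 - 4 * det M" and q0: "q \<ge> 0" unfolding q_def by simp_all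
  have "r\<^sup>2 - trace M * r + det M = (r - (trace M + q) / 2) * (r - (trace M - q) / 2)" for r
    using qq by (simp add: power2_eq_square field_simps)
  hence E: "eigenvalues M = {(trace M + q) / 2, (trace M - q) / 2}"
    unfolding eigenvalues_symmetric[OF s] by auto
  show max: "lambda_max M = (trace M + q) / 2" and min: "lambda_min M = (trace M - q) / 2"
    unfolding lambda_max_def lambda_min_def E using q0 by (simp_all add: max_def min_def)
  show "lambda_min M + lambda_max M = trace M" "lambda_min M \<le> lambda_max M"
    unfolding max min using q0 by (simp_all add: field_simps)
  show "lambda_min M * lambda_max M = det M"
    unfolding max min using qq by (simp add: field_simps power2_eq_square)
qed

lemma lambda_max_unimodular:
  assumes "symmetric_mat M" "det M = 1"
  shows "lambda_max M = exp_dist (trace M)"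
  using lambda_symmetric(1)[OF assms(1)] assms(2) unfolding exp_dist_def by simp

lemma quadratic_form_2:
  "(v::real^2) \<bullet> (M *v v) = M$1$1 * (v$1)\<^sup>2 + (M$1$2 + M$2$1) * v$1 * v$2 + M$2$2 * (v$2)\<^sup>2"
  by (simp add: inner_vec_def sum_2 matrix_vector_mult_def power2_eq_square algebra_simps)

lemma pos_def_diag:
  assumes "pos_def M" shows "M$1$1 > 0" "M$2$2 > 0"
proof -
  have "(vector [1, 0] :: real^2) \<bullet> (M *v vector [1, 0]) > 0"
    and "(vector [0, 1] :: real^2) \<bullet> (M *v vector [0, 1]) > 0"
    using assms unfolding pos_def_def by (auto simp: vec2_nonzero_iff)
  thus "M$1$1 > 0" "M$2$2 > 0" unfolding quadratic_form_2 by simp_all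
qed

lemma pos_def_iff:
  assumes s: "symmetric_mat M"
  shows "pos_def M \<longleftrightarrow> M$1$1 > 0 \<and> det M > 0"
proof -
  have s': "M$2$1 = M$1$2" using s by (simp add: symmetric_mat_iff)
  txt \<open>Completing the square.\<close>
  have square: "M$1$1 * (v \<bullet> (M *v v)) = (M$1$1 * v$1 + M$1$2 * v$2)\<^sup>2 + det M * (v$2)\<^sup>2"
    for v :: "real^2"
    unfolding quadratic_form_2 det_2 s' by (simp add: power2_eq_square algebra_simps)
  show ?thesis
  proof
    assume pd: "pos_def M"
    have a: "M$1$1 > 0" using pos_def_diag[OF pd] by simp
    have "(vector [M$1$2, - M$1$1] :: real^2) \<bullet> (M *v vector [M$1$2, - M$1$1]) > 0"
      using pd a unfolding pos_def_def by (auto simp: vec2_nonzero_iff)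
    hence "M$1$1 * det M > 0"
      unfolding quadratic_form_2 det_2 s' by (simp add: power2_eq_square algebra_simps)
    thus "M$1$1 > 0 \<and> det M > 0" using a by (simp add: zero_less_mult_iff)
  next
    assume "M$1$1 > 0 \<and> det M > 0"
    hence a: "M$1$1 > 0" and d: "det M > 0" by simp_all
    show "pos_def M" unfolding pos_def_def
    proof (intro allI impI)
      fix v :: "real^2" assume "v \<noteq> 0"
      hence "(M$1$1 * v$1 + M$1$2 * v$2)\<^sup>2 + det M * (v$2)\<^sup>2 > 0"
        using a d by (cases "v$2 = 0") (auto simp: vec2_nonzero_iff add_nonneg_pos)
      thus "v \<bullet> (M *v v) > 0" using a square[of v] by (metis zero_less_mult_pos)
    qed
  qed
qed

section \<open>The hyperbolic plane\<close>

text \<open>The hyperbolic plane, modelled as the unimodular positive definite symmetric matrices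
  (equivalently, the upper sheet of the hyperboloid \<open>xz - y\<^sup>2 = 1\<close>).\<close>
definition hyp_point :: "mat2 \<Rightarrow> bool" where
  "hyp_point P \<longleftrightarrow> symmetric_mat P \<and> det P = 1 \<and> P$1$1 > 0"

text \<open>The polar form of the determinant.  On hyperbolic points it equals \<open>2 cosh\<close> of the
  hyperbolic distance, so \<open>exp_dist (hyp_pairing P Q)\<close> is the exponential of that distance.\<close>
definition hyp_pairing :: "mat2 \<Rightarrow> mat2 \<Rightarrow> real" where
  "hyp_pairing P Q = P$1$1 * Q$2$2 + P$2$2 * Q$1$1 - P$1$2 * Q$2$1 - P$2$1 * Q$1$2"

lemma hyp_pairing_commute: "hyp_pairing P Q = hyp_pairing Q P"
  unfolding hyp_pairing_def by simp

lemma hyp_pairing_self: "hyp_pairing P P = 2 * det P"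
  unfolding hyp_pairing_def det_2 by simp

lemma hyp_pairing_add_left: "hyp_pairing (P + Q) R = hyp_pairing P R + hyp_pairing Q R"
  unfolding hyp_pairing_def by (simp add: algebra_simps)

lemma hyp_pairing_scaleR_left: "hyp_pairing (c *\<^sub>R P) Q = c * hyp_pairing P Q"
  unfolding hyp_pairing_def by (simp add: algebra_simps)

lemma det_add_2: "det (P + Q :: mat2) = det P + det Q + hyp_pairing P Q"
  unfolding hyp_pairing_def det_2 by (simp add: algebra_simps)

lemma det_scaleR_2: "det (c *\<^sub>R P :: mat2) = c\<^sup>2 * det P"
  unfolding det_2 by (simp add: power2_eq_square algebra_simps)

lemma trace_mult_adj2: "trace (M ** adj2 N) = hyp_pairing M N"
  unfolding trace_2 adj2_def hyp_pairing_def by (simp add: mat2_simps algebra_simps)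

text \<open>The reverse Cauchy--Schwarz inequality: hyperbolic distances are nonnegative.\<close>
lemma hyp_pairing_ge_2:
  assumes P: "hyp_point P" and Q: "hyp_point Q"
  shows "hyp_pairing P Q \<ge> 2"
proof -
  have s: "P$2$1 = P$1$2" "Q$2$1 = Q$1$2" and pos: "P$1$1 * Q$1$1 > 0"
    using assms unfolding hyp_point_def symmetric_mat_iff by auto
  have dP: "P$1$1 * P$2$2 = 1 + (P$1$2)\<^sup>2" and dQ: "Q$1$1 * Q$2$2 = 1 + (Q$1$2)\<^sup>2"
    using assms unfolding hyp_point_def det_2 s by (simp_all add: power2_eq_square)
  have "P$1$1 * Q$1$1 * (hyp_pairing P Q - 2)
          = (P$1$1)\<^sup>2 * (Q$1$1 * Q$2$2) + (Q$1$1)\<^sup>2 * (P$1$1 * P$2$2)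
            - 2 * P$1$1 * Q$1$1 * P$1$2 * Q$1$2 - 2 * P$1$1 * Q$1$1"
    unfolding hyp_pairing_def s by (simp add: power2_eq_square algebra_simps)
  also have "\<dots> = (P$1$1 - Q$1$1)\<^sup>2 + (P$1$1 * Q$1$2 - Q$1$1 * P$1$2)\<^sup>2"
    unfolding dP dQ by (simp add: power2_eq_square algebra_simps)
  finally have "P$1$1 * Q$1$1 * (hyp_pairing P Q - 2) \<ge> 0" by simp
  thus ?thesis using pos by (simp add: zero_le_mult_iff)
qed

text \<open>Three symmetric matrices have a nonnegative Gram-type determinant: it is a perfect
  square.  This is what makes hyperbolic triangles satisfy the triangle inequality.\<close>
lemma hyp_gram_inequality:
  assumes "symmetric_mat P" "symmetric_mat Q" "symmetric_mat R"
  shows "det P * (hyp_pairing Q R)\<^sup>2 + det Q * (hyp_pairing P R)\<^sup>2 + det R * (hyp_pairing P Q)\<^sup>2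
           \<le> 4 * det P * det Q * det R + hyp_pairing P Q * hyp_pairing P R * hyp_pairing Q R"
proof -
  have s: "P$2$1 = P$1$2" "Q$2$1 = Q$1$2" "R$2$1 = R$1$2"
    using assms unfolding symmetric_mat_iff by simp_all
  have "4 * det P * det Q * det R + hyp_pairing P Q * hyp_pairing P R * hyp_pairing Q R
        - (det P * (hyp_pairing Q R)\<^sup>2 + det Q * (hyp_pairing P R)\<^sup>2 + det R * (hyp_pairing P Q)\<^sup>2)
      = (P$1$1 * (Q$2$2 * R$1$2 - Q$1$2 * R$2$2) - P$2$2 * (Q$1$1 * R$1$2 - Q$1$2 * R$1$1)
          + P$1$2 * (Q$1$1 * R$2$2 - Q$2$2 * R$1$1))\<^sup>2"
    unfolding hyp_pairing_def det_2 s by algebra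
  thus ?thesis by (smt (verit) zero_le_power2)
qed

lemma hyp_triangle:
  assumes "hyp_point P" "hyp_point Q" "hyp_point R"
  shows "exp_dist (hyp_pairing Q R) \<le> exp_dist (hyp_pairing P Q) * exp_dist (hyp_pairing P R)"
proof (rule exp_dist_triangle)
  show "hyp_pairing P Q \<ge> 2" "hyp_pairing P R \<ge> 2" "hyp_pairing Q R \<ge> 2"
    using assms by (simp_all add: hyp_pairing_ge_2)
  show "(hyp_pairing P Q)\<^sup>2 + (hyp_pairing P R)\<^sup>2 + (hyp_pairing Q R)\<^sup>2
          \<le> 4 + hyp_pairing P Q * hyp_pairing P R * hyp_pairing Q R"
    using hyp_gram_inequality[of P Q R] assms unfolding hyp_point_def by simp
qed

text \<open>The hyperbolic midpoint of \<open>Q\<close> and \<open>R\<close> is their normalised sum; its pairing with both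
  endpoints is \<open>2 cosh\<close> of half their distance.\<close>
lemma hyp_midpoint:
  assumes Q: "hyp_point Q" and R: "hyp_point R"
  defines "k \<equiv> sqrt (2 + hyp_pairing Q R)"
  shows "hyp_point ((1/k) *\<^sub>R (Q + R))"
    and "hyp_pairing ((1/k) *\<^sub>R (Q + R)) Q = k" and "hyp_pairing ((1/k) *\<^sub>R (Q + R)) R = k"
proof -
  have dQ: "det Q = 1" and dR: "det R = 1" using Q R unfolding hyp_point_def by simp_all
  have c: "hyp_pairing Q R \<ge> 2" using hyp_pairing_ge_2[OF Q R] .
  have k: "k > 0" "k\<^sup>2 = 2 + hyp_pairing Q R" unfolding k_def using c by simp_all
  show "hyp_point ((1/k) *\<^sub>R (Q + R))"
    unfolding hyp_point_def
  proof (intro conjI)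
    show "symmetric_mat ((1/k) *\<^sub>R (Q + R))"
      using Q R unfolding hyp_point_def symmetric_mat_iff by simp
    show "det ((1/k) *\<^sub>R (Q + R)) = 1"
      unfolding det_scaleR_2 det_add_2 dQ dR using k c by (simp add: power_divide)
    show "((1/k) *\<^sub>R (Q + R))$1$1 > 0" using Q R k(1) unfolding hyp_point_def by simp
  qed
  show "hyp_pairing ((1/k) *\<^sub>R (Q + R)) Q = k" "hyp_pairing ((1/k) *\<^sub>R (Q + R)) R = k"
    unfolding hyp_pairing_scaleR_left hyp_pairing_add_left hyp_pairing_self dQ dR
    using k c by (simp_all add: hyp_pairing_commute[of R Q] power2_eq_square field_simps)
qed

section \<open>Congruences and weights\<close>

text \<open>Every \<open>B \<in> SL(2)\<close> determines the hyperbolic point \<open>(B B\<^sup>T)\<^sup>-\<^sup>1 = adj (B B\<^sup>T)\<close>; the top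
  eigenvalue of the congruence \<open>B\<^sup>T M B\<close> depends only on the distance from it to \<open>M\<close>.\<close>
definition weight :: "mat2 \<Rightarrow> mat2" where
  "weight B = adj2 (B ** transpose B)"

lemma hyp_point_weight:
  assumes "det B = 1" shows "hyp_point (weight B)"
  unfolding hyp_point_def
proof (intro conjI)
  show "symmetric_mat (weight B)"
    unfolding weight_def adj2_def symmetric_mat_iff by (simp add: mat2_simps mult.commute)
  show "det (weight B) = 1"
    using assms unfolding weight_def by (simp add: det_mul det_transpose)
  have "B$2$1 \<noteq> 0 \<or> B$2$2 \<noteq> 0" using assms by (auto simp: det_2)
  moreover have "weight B $1$1 = (B$2$1)\<^sup>2 + (B$2$2)\<^sup>2"
    unfolding weight_def adj2_def by (simp add: mat2_simps power2_eq_square)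
  ultimately show "weight B $1$1 > 0" by (simp add: sum_power2_gt_zero_iff)
qed

text \<open>\<open>trace (B\<^sup>T M B) = trace (M B B\<^sup>T)\<close>, and \<open>B B\<^sup>T\<close> is the adjugate of the weight.\<close>
lemma trace_congruence:
  "trace (transpose B ** M ** B) = hyp_pairing M (weight B)"
proof -
  have "trace (transpose B ** M ** B) = trace (M ** (B ** transpose B))"
    by (metis matrix_mul_assoc trace_mul_sym)
  thus ?thesis unfolding weight_def trace_mult_adj2[symmetric] by simp
qed

lemma lambda_max_congruence:
  assumes B: "det B = 1" and M: "hyp_point M"
  shows "lambda_max (transpose B ** M ** B) = exp_dist (hyp_pairing (weight B) M)"
proof -
  have "symmetric_mat (transpose B ** M ** B)"
    using M unfolding hyp_point_def symmetric_mat_def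
    by (simp add: matrix_transpose_mul matrix_mul_assoc)
  moreover have "det (transpose B ** M ** B) = 1"
    using B M unfolding hyp_point_def by (simp add: det_mul det_transpose)
  ultimately show ?thesis
    by (simp add: lambda_max_unimodular trace_congruence hyp_pairing_commute)
qed

text \<open>Conversely every hyperbolic point is a weight (a Cholesky factorisation).\<close>
lemma weight_surj:
  assumes W: "hyp_point W" shows "\<exists>B. det B = 1 \<and> weight B = W"
proof -
  have s: "W$2$1 = W$1$2" and d: "W$1$1 * W$2$2 = 1 + (W$1$2)\<^sup>2" and x: "W$1$1 > 0"
    using W unfolding hyp_point_def symmetric_mat_iff det_2 by (auto simp: power2_eq_square)
  have z: "W$2$2 > 0"
    using d x by (metis add_pos_nonneg zero_le_power2 zero_less_mult_pos zero_less_one)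
  define r where "r = sqrt (W$2$2)"
  have r: "r > 0" "r\<^sup>2 = W$2$2" unfolding r_def using z by simp_all
  define B where "B = mk2 r 0 (- W$1$2 / r) (1 / r)"
  have "det B = 1" unfolding B_def det_2 using r by simp
  moreover have "B ** transpose B = adj2 W"
    unfolding B_def adj2_def mat2_eq_iff using r s d x z
    by (simp add: mat2_simps power2_eq_square field_simps)
  ultimately show ?thesis unfolding weight_def by auto
qed

section \<open>The matrices G and H\<close>

definition hyp_normalize :: "mat2 \<Rightarrow> mat2" where
  "hyp_normalize N = (1 / sqrt (det N)) *\<^sub>R N"

lemma hyp_point_normalize:
  assumes s: "symmetric_mat N" and pd: "pos_def N"
  shows "hyp_point (hyp_normalize N)"
proof -
  have N: "N$1$1 > 0" "det N > 0" using pd unfolding pos_def_iff[OF s] by simp_all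
  show ?thesis
    unfolding hyp_point_def hyp_normalize_def
    using s N by (simp add: symmetric_mat_iff det_scaleR_2 power_divide)
qed

lemma hyp_pairing_normalize:
  assumes "det N1 > 0" "det N2 > 0"
  shows "hyp_pairing (hyp_normalize N1) (hyp_normalize N2)
           = hyp_pairing N1 N2 / sqrt (det N1 * det N2)"
  using assms unfolding hyp_normalize_def
  by (simp add: hyp_pairing_scaleR_left hyp_pairing_commute[of N1] real_sqrt_mult)

lemma pos_def_adj2:
  assumes "symmetric_mat N" "pos_def N"
  shows "symmetric_mat (adj2 N)" "pos_def (adj2 N)"
proof -
  have "N$2$2 > 0" using pos_def_diag[OF assms(2)] by simp
  moreover have "det N > 0" using assms by (simp add: pos_def_iff)
  moreover show sym: "symmetric_mat (adj2 N)"
    using assms(1) unfolding adj2_def symmetric_mat_iff by simp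
  ultimately show "pos_def (adj2 N)" unfolding pos_def_iff[OF sym] det_adj2 by (simp add: adj2_def)
qed

lemma sym_part_simps [simp]:
  "sym_part \<sigma> $1$1 = \<sigma>$1$1" "sym_part \<sigma> $2$2 = \<sigma>$2$2"
  "sym_part \<sigma> $1$2 = (\<sigma>$1$2 + \<sigma>$2$1) / 2" "sym_part \<sigma> $2$1 = (\<sigma>$1$2 + \<sigma>$2$1) / 2"
  unfolding sym_part_def by (simp_all add: transpose_def)

lemma symmetric_sym_part: "symmetric_mat (sym_part \<sigma>)"
  by (simp add: symmetric_mat_iff)

lemma det_sym_part_pos: "pos_def (sym_part \<sigma>) \<Longrightarrow> det (sym_part \<sigma>) > 0"
  by (simp add: pos_def_iff symmetric_sym_part)

lemma sym_part_symmetric: "symmetric_mat \<sigma> \<Longrightarrow> sym_part \<sigma> = \<sigma>"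
  unfolding sym_part_def symmetric_mat_def by (simp add: scaleR_2)

lemma Gmat_eq: "Gmat \<sigma> = hyp_normalize (adj2 (sym_part \<sigma>))"
  unfolding hyp_normalize_def det_adj2 unfolding Gmat_def adj2_def mat2_eq_iff
  by (simp add: minus_divide_left)

text \<open>The matrix \<open>H(\<sigma>)\<close> is the normalisation of \<open>H_core \<sigma>\<close>, whose determinant is that of the
  symmetric part since \<open>det \<sigma> = det \<sigma>\<^sup>S + a\<^sup>2\<close> for the antisymmetric coefficient \<open>a\<close>.\<close>
definition H_core :: "mat2 \<Rightarrow> mat2" where
  "H_core \<sigma> = mk2 (det \<sigma>) ((\<sigma>$2$1 - \<sigma>$1$2) / 2) ((\<sigma>$2$1 - \<sigma>$1$2) / 2) 1"

lemma det_H_core: "det (H_core \<sigma>) = det (sym_part \<sigma>)"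
  unfolding H_core_def det_2 by (simp add: field_simps)

lemma Hmat_eq: "Hmat \<sigma> = hyp_normalize (H_core \<sigma>)"
  unfolding Hmat_def hyp_normalize_def H_core_def det_H_core[unfolded H_core_def] mat2_eq_iff
  by simp

lemma pos_def_H_core:
  assumes "pos_def (sym_part \<sigma>)"
  shows "symmetric_mat (H_core \<sigma>)" "pos_def (H_core \<sigma>)"
proof -
  show sym: "symmetric_mat (H_core \<sigma>)" unfolding H_core_def symmetric_mat_iff by simp
  have d: "det (sym_part \<sigma>) > 0" using assms by (rule det_sym_part_pos)
  moreover have "det \<sigma> = det (sym_part \<sigma>) + ((\<sigma>$2$1 - \<sigma>$1$2) / 2)\<^sup>2"
    unfolding det_2 by (simp add: power2_eq_square field_simps)
  ultimately have "det \<sigma> > 0" by (smt (verit) zero_le_power2)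
  thus "pos_def (H_core \<sigma>)"
    using d by (simp add: pos_def_iff[OF sym] det_H_core) (simp add: H_core_def)
qed

lemma hyp_point_Gmat: "pos_def (sym_part \<sigma>) \<Longrightarrow> hyp_point (Gmat \<sigma>)"
  unfolding Gmat_eq using pos_def_adj2 symmetric_sym_part hyp_point_normalize by blast

lemma hyp_point_Hmat: "pos_def (sym_part \<sigma>) \<Longrightarrow> hyp_point (Hmat \<sigma>)"
  unfolding Hmat_eq using pos_def_H_core hyp_point_normalize by blast

lemma hyp_pairing_Gmat:
  assumes "pos_def (sym_part \<sigma>1)" "pos_def (sym_part \<sigma>2)"
  shows "hyp_pairing (Gmat \<sigma>1) (Gmat \<sigma>2)
           = hyp_pairing (sym_part \<sigma>1) (sym_part \<sigma>2) / sqrt (det (sym_part \<sigma>1) * det (sym_part \<sigma>2))"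
proof -
  have "hyp_pairing (adj2 N1) (adj2 N2) = hyp_pairing N1 N2" for N1 N2
    unfolding adj2_def hyp_pairing_def by simp
  thus ?thesis unfolding Gmat_eq
    using assms by (simp add: hyp_pairing_normalize det_sym_part_pos)
qed

lemma hyp_pairing_Hmat:
  assumes "pos_def (sym_part \<sigma>1)" "pos_def (sym_part \<sigma>2)"
  shows "hyp_pairing (Hmat \<sigma>1) (Hmat \<sigma>2)
           = (det \<sigma>1 + det \<sigma>2 - (1/2) * (\<sigma>1$2$1 - \<sigma>1$1$2) * (\<sigma>2$2$1 - \<sigma>2$1$2))
             / sqrt (det (sym_part \<sigma>1) * det (sym_part \<sigma>2))"
  unfolding Hmat_eq using assms
  by (simp add: hyp_pairing_normalize det_sym_part_pos det_H_core)
     (simp add: hyp_pairing_def H_core_def)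

section \<open>The value of K^min\<close>

lemma exp_dist_pairing_ge_1:
  "hyp_point P \<Longrightarrow> hyp_point Q \<Longrightarrow> exp_dist (hyp_pairing P Q) \<ge> 1"
  by (simp add: exp_dist_ge_1 hyp_pairing_ge_2)

lemma lambda_max_congruence_ge_1:
  "det B = 1 \<Longrightarrow> hyp_point M \<Longrightarrow> lambda_max (transpose B ** M ** B) \<ge> 1"
  by (simp add: lambda_max_congruence exp_dist_pairing_ge_1 hyp_point_weight)

text \<open>Lower bound (triangle inequality through the point \<open>weight B\<close>).\<close>
lemma congruence_pair_bound:
  assumes "det B = 1" "hyp_point G1" "hyp_point G2"
  shows "exp_dist (hyp_pairing G1 G2)
           \<le> lambda_max (transpose B ** G1 ** B) * lambda_max (transpose B ** G2 ** B)"
  using hyp_triangle[OF hyp_point_weight[OF assms(1)] assms(2,3)] assms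
  by (simp add: lambda_max_congruence)

text \<open>The bound is attained, with equal factors, when \<open>weight B\<close> is the midpoint.\<close>
lemma congruence_pair_optimal:
  assumes G1: "hyp_point G1" and G2: "hyp_point G2"
  shows "\<exists>B. det B = 1
           \<and> lambda_max (transpose B ** G1 ** B) = sqrt (exp_dist (hyp_pairing G1 G2))
           \<and> lambda_max (transpose B ** G2 ** B) = sqrt (exp_dist (hyp_pairing G1 G2))"
proof -
  define c where "c = hyp_pairing G1 G2"
  define k where "k = sqrt (2 + c)"
  note mid = hyp_midpoint[OF G1 G2, folded c_def, folded k_def]
  obtain B where B: "det B = 1" "weight B = (1/k) *\<^sub>R (G1 + G2)"
    using weight_surj[OF mid(1)] by blast
  have c2: "c \<ge> 2" unfolding c_def using hyp_pairing_ge_2[OF G1 G2] .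
  hence "k \<ge> 2" unfolding k_def by (simp add: real_le_rsqrt)
  hence "exp_dist k > 0" by (rule exp_dist_pos)
  hence "exp_dist k = sqrt (exp_dist c)"
    using real_sqrt_unique[OF exp_dist_half[OF c2, folded k_def]] by simp
  thus ?thesis using B mid lambda_max_congruence[OF B(1)] G1 G2 unfolding c_def by auto
qed

lemma Kmin_hyperbolic:
  assumes pd1: "pos_def (sym_part \<sigma>1)" and pd2: "pos_def (sym_part \<sigma>2)"
  defines "K \<equiv> sqrt (exp_dist (hyp_pairing (Gmat \<sigma>1) (Gmat \<sigma>2))
                    * exp_dist (hyp_pairing (Hmat \<sigma>1) (Hmat \<sigma>2)))"
  shows "Kmin \<sigma>1 \<sigma>2 \<in> Kvals \<sigma>1 \<sigma>2" and "Kmin \<sigma>1 \<sigma>2 = K"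
proof -
  have G: "hyp_point (Gmat \<sigma>1)" "hyp_point (Gmat \<sigma>2)"
    and H: "hyp_point (Hmat \<sigma>1)" "hyp_point (Hmat \<sigma>2)"
    using pd1 pd2 by (simp_all add: hyp_point_Gmat hyp_point_Hmat)
  have lower: "K \<le> v" if v: "v \<in> Kvals \<sigma>1 \<sigma>2" for v
  proof -
    obtain A B where AB: "det A = 1" "det B = 1"
      and v_eq: "v = max (lambda_max (transpose B ** Gmat \<sigma>1 ** B) * lambda_max (transpose A ** Hmat \<sigma>1 ** A))
                      (lambda_max (transpose B ** Gmat \<sigma>2 ** B) * lambda_max (transpose A ** Hmat \<sigma>2 ** A))"
      using v unfolding Kvals_def SL2_def by blast
    show ?thesis unfolding K_def v_eq
      using G H AB congruence_pair_bound[OF AB(2) G] congruence_pair_bound[OF AB(1) H]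
      by (intro sqrt_le_max_products)
         (simp_all add: order_trans[OF zero_le_one exp_dist_pairing_ge_1]
            order_trans[OF zero_le_one lambda_max_congruence_ge_1])
  qed
  have attained: "K \<in> Kvals \<sigma>1 \<sigma>2"
  proof -
    obtain B where B: "det B = 1"
      "lambda_max (transpose B ** Gmat \<sigma>1 ** B) = sqrt (exp_dist (hyp_pairing (Gmat \<sigma>1) (Gmat \<sigma>2)))"
      "lambda_max (transpose B ** Gmat \<sigma>2 ** B) = sqrt (exp_dist (hyp_pairing (Gmat \<sigma>1) (Gmat \<sigma>2)))"
      using congruence_pair_optimal[OF G] by blast
    obtain A where A: "det A = 1"
      "lambda_max (transpose A ** Hmat \<sigma>1 ** A) = sqrt (exp_dist (hyp_pairing (Hmat \<sigma>1) (Hmat \<sigma>2)))"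
      "lambda_max (transpose A ** Hmat \<sigma>2 ** A) = sqrt (exp_dist (hyp_pairing (Hmat \<sigma>1) (Hmat \<sigma>2)))"
      using congruence_pair_optimal[OF H] by blast
    have "K = max (lambda_max (transpose B ** Gmat \<sigma>1 ** B) * lambda_max (transpose A ** Hmat \<sigma>1 ** A))
                  (lambda_max (transpose B ** Gmat \<sigma>2 ** B) * lambda_max (transpose A ** Hmat \<sigma>2 ** A))"
      unfolding K_def A B by (simp add: real_sqrt_mult)
    thus ?thesis unfolding Kvals_def SL2_def using A(1) B(1) by blast
  qed
  show "Kmin \<sigma>1 \<sigma>2 = K" unfolding Kmin_def using attained lower by (rule cInf_eq_minimum)
  thus "Kmin \<sigma>1 \<sigma>2 \<in> Kvals \<sigma>1 \<sigma>2" using attained by simp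
qed

section \<open>Square roots and the symmetric case\<close>

lemma cayley_hamilton_2: "M ** M = trace M *\<^sub>R M - det M *\<^sub>R (mat 1 :: mat2)"
  unfolding mat2_eq_iff by (simp add: mat2_simps trace_2 det_2 algebra_simps)

text \<open>The square root of a positive definite symmetric \<open>2\<times>2\<close> matrix in closed form:
  by Cayley--Hamilton, \<open>S\<^sup>2 = N\<close> forces \<open>(trace S) S = N + (det S) I\<close>.\<close>
definition pd_root :: "mat2 \<Rightarrow> mat2" where
  "pd_root N = (1 / sqrt (trace N + 2 * sqrt (det N))) *\<^sub>R (N + sqrt (det N) *\<^sub>R mat 1)"

lemma pd_root_unique:
  assumes s: "symmetric_mat S" and pd: "pos_def S" and sq: "S ** S = N"
  shows "S = pd_root N"
proof -
  have S: "det S > 0" using pd unfolding pos_def_iff[OF s] by simp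
  have tr: "trace S > 0" using pos_def_diag[OF pd] unfolding trace_2 by simp
  have "det N = (det S)\<^sup>2" unfolding sq[symmetric] det_mul by (simp add: power2_eq_square)
  hence dS: "sqrt (det N) = det S" using S by simp
  have CH: "N + det S *\<^sub>R mat 1 = trace S *\<^sub>R S"
    using cayley_hamilton_2[of S] unfolding sq by simp
  hence "trace N + 2 * det S = (trace S)\<^sup>2"
    unfolding mat2_eq_iff by (simp add: trace_2 power2_eq_square algebra_simps)
  hence "sqrt (trace N + 2 * sqrt (det N)) = trace S" unfolding dS using tr by simp
  thus ?thesis unfolding pd_root_def dS CH using tr by simp
qed

lemma pd_root_props:
  assumes s: "symmetric_mat N" and pd: "pos_def N"
  shows "symmetric_mat (pd_root N)" "pos_def (pd_root N)" "pd_root N ** pd_root N = N"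
proof -
  have N: "N$1$1 > 0" "N$2$2 > 0" "det N > 0"
    using pd pos_def_diag[OF pd] unfolding pos_def_iff[OF s] by simp_all
  have s': "N$2$1 = N$1$2" using s by (simp add: symmetric_mat_iff)
  define \<delta> where "\<delta> = sqrt (det N)"
  define \<tau> where "\<tau> = sqrt (trace N + 2 * \<delta>)"
  have \<delta>: "\<delta> > 0" "\<delta> * \<delta> = N$1$1 * N$2$2 - N$1$2 * N$1$2"
    unfolding \<delta>_def using N(3) by (simp_all add: det_2 s')
  have \<tau>: "\<tau> > 0" "\<tau> * \<tau> = N$1$1 + N$2$2 + 2 * \<delta>"
    unfolding \<tau>_def trace_2 using N(1,2) \<delta>(1) by simp_all
  have root: "pd_root N = mk2 ((N$1$1 + \<delta>) / \<tau>) (N$1$2 / \<tau>) (N$1$2 / \<tau>) ((N$2$2 + \<delta>) / \<tau>)"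
    unfolding pd_root_def \<delta>_def[symmetric] \<tau>_def[symmetric] mat2_eq_iff using s' by simp
  show sym: "symmetric_mat (pd_root N)" unfolding root symmetric_mat_iff by simp
  have "det (pd_root N) = ((N$1$1 + \<delta>) * (N$2$2 + \<delta>) - N$1$2 * N$1$2) / (\<tau> * \<tau>)"
    unfolding root det_2 using \<tau>(1) by (simp add: field_simps)
  also have "(N$1$1 + \<delta>) * (N$2$2 + \<delta>) - N$1$2 * N$1$2 = \<delta> * (\<tau> * \<tau>)"
    unfolding \<tau>(2) using \<delta>(2) by (simp add: algebra_simps)
  finally have "det (pd_root N) = \<delta>" using \<tau>(1) by simp
  moreover have "pd_root N $1$1 > 0" unfolding root using N(1) \<delta>(1) \<tau>(1) by simp
  ultimately show "pos_def (pd_root N)" unfolding pos_def_iff[OF sym] using \<delta>(1) by simp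
  have sq: "mk2 (a / \<tau>) (b / \<tau>) (b / \<tau>) (c / \<tau>) ** mk2 (a / \<tau>) (b / \<tau>) (b / \<tau>) (c / \<tau>)
      = mk2 ((a * a + b * b) / (\<tau> * \<tau>)) ((a * b + b * c) / (\<tau> * \<tau>))
            ((a * b + b * c) / (\<tau> * \<tau>)) ((b * b + c * c) / (\<tau> * \<tau>))" for a b c
    unfolding mat2_eq_iff by (simp add: mat2_simps add_divide_distrib mult.commute)
  have "(N$1$1 + \<delta>) * (N$1$1 + \<delta>) + N$1$2 * N$1$2 = N$1$1 * (\<tau> * \<tau>)"
    and "(N$1$1 + \<delta>) * N$1$2 + N$1$2 * (N$2$2 + \<delta>) = N$1$2 * (\<tau> * \<tau>)"
    and "N$1$2 * N$1$2 + (N$2$2 + \<delta>) * (N$2$2 + \<delta>) = N$2$2 * (\<tau> * \<tau>)"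
    unfolding \<tau>(2) using \<delta>(2) by (simp_all add: algebra_simps)
  hence "pd_root N ** pd_root N = mk2 (N$1$1 * (\<tau> * \<tau>) / (\<tau> * \<tau>)) (N$1$2 * (\<tau> * \<tau>) / (\<tau> * \<tau>))
                                     (N$1$2 * (\<tau> * \<tau>) / (\<tau> * \<tau>)) (N$2$2 * (\<tau> * \<tau>) / (\<tau> * \<tau>))"
    unfolding root sq by (simp only:)
  thus "pd_root N ** pd_root N = N" unfolding mat2_eq_iff using \<tau>(1) s' by simp
qed

lemma pd_sqrt_eq:
  assumes "symmetric_mat N" "pos_def N"
  shows "pd_sqrt N = pd_root N"
  unfolding pd_sqrt_def
proof (rule the_equality)
  show "symmetric_mat (pd_root N) \<and> pos_def (pd_root N) \<and> pd_root N ** pd_root N = N"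
    using pd_root_props[OF assms] by simp
  show "S = pd_root N" if "symmetric_mat S \<and> pos_def S \<and> S ** S = N" for S
    using that pd_root_unique by blast
qed

text \<open>In the symmetric case, \<open>P = \<sigma>\<^sub>1\<^sup>-\<^sup>1\<^sup>/\<^sup>2 \<sigma>\<^sub>2 \<sigma>\<^sub>1\<^sup>-\<^sup>1\<^sup>/\<^sup>2\<close> is similar to \<open>\<sigma>\<^sub>2 \<sigma>\<^sub>1\<^sup>-\<^sup>1\<close>, so its trace and
  determinant are expressed through the pairing and determinants of \<open>\<sigma>\<^sub>1, \<sigma>\<^sub>2\<close>.\<close>
lemma inverse_root_congruence:
  assumes s1: "symmetric_mat \<sigma>1" and s2: "symmetric_mat \<sigma>2" and pd1: "pos_def \<sigma>1"
  defines "S \<equiv> pd_sqrt (matrix_inv \<sigma>1)"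
  defines "P \<equiv> S ** \<sigma>2 ** S"
  shows "symmetric_mat P" and "trace P = hyp_pairing \<sigma>1 \<sigma>2 / det \<sigma>1"
    and "det P = det \<sigma>2 / det \<sigma>1"
proof -
  have d1: "det \<sigma>1 > 0" using pd1 s1 by (simp add: pos_def_iff)
  define E where "E = (1 / det \<sigma>1) *\<^sub>R adj2 \<sigma>1"
  have inv: "matrix_inv \<sigma>1 = E" unfolding E_def using d1 by (simp add: matrix_inv_2)
  have sE: "symmetric_mat E" using s1 unfolding E_def adj2_def symmetric_mat_iff by simp
  have "adj2 \<sigma>1 $1$1 > 0"
    using pos_def_adj2[OF s1 pd1] by (simp add: pos_def_iff)
  hence "pos_def E"
    unfolding pos_def_iff[OF sE] unfolding E_def using d1 by (simp add: det_scaleR_2)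
  hence S: "symmetric_mat S" "S ** S = E"
    unfolding S_def inv using pd_sqrt_eq[OF sE] pd_root_props[OF sE] by simp_all
  show "symmetric_mat P"
    using S(1) s2 unfolding P_def symmetric_mat_def by (simp add: matrix_transpose_mul matrix_mul_assoc)
  have "trace P = trace (\<sigma>2 ** (S ** S))"
    unfolding P_def by (metis matrix_mul_assoc trace_mul_sym)
  also have "\<dots> = trace (\<sigma>2 ** adj2 \<sigma>1) / det \<sigma>1"
    unfolding S(2) E_def matrix_scalar_ac scalar_matrix_assoc[symmetric]
    by (simp add: trace_2 add_divide_distrib)
  finally show "trace P = hyp_pairing \<sigma>1 \<sigma>2 / det \<sigma>1"
    by (simp add: trace_mult_adj2 hyp_pairing_commute)
  have "det P = det (S ** S) * det \<sigma>2" unfolding P_def by (simp add: det_mul)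
  thus "det P = det \<sigma>2 / det \<sigma>1"
    unfolding S(2) E_def det_scaleR_2 det_adj2 using d1 by (simp add: power2_eq_square)
qed

lemma symmetric_case:
  assumes s1: "symmetric_mat \<sigma>1" and s2: "symmetric_mat \<sigma>2"
    and pd1: "pos_def \<sigma>1" and pd2: "pos_def \<sigma>2"
  defines "P \<equiv> pd_sqrt (matrix_inv \<sigma>1) ** \<sigma>2 ** pd_sqrt (matrix_inv \<sigma>1)"
  shows "sqrt (exp_dist (hyp_pairing \<sigma>1 \<sigma>2 / sqrt (det \<sigma>1 * det \<sigma>2))
                 * exp_dist ((det \<sigma>1 + det \<sigma>2) / sqrt (det \<sigma>1 * det \<sigma>2)))
           = max (1 / sqrt (lambda_min P)) (sqrt (lambda_max P))"
proof -
  define d1 d2 l1 l2 where "d1 = det \<sigma>1" "d2 = det \<sigma>2" "l1 = lambda_min P" "l2 = lambda_max P"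
  have d: "d1 > 0" "d2 > 0" unfolding d1_d2_l1_l2_def using s1 s2 pd1 pd2 by (simp_all add: pos_def_iff)
  note P = inverse_root_congruence[OF s1 s2 pd1, folded P_def]
  have sum: "l1 + l2 = hyp_pairing \<sigma>1 \<sigma>2 / d1" and prod: "l1 * l2 = d2 / d1"
    and le: "l1 \<le> l2"
    unfolding d1_d2_l1_l2_def using lambda_symmetric[OF P(1)] P by simp_all
  txt \<open>The pairing is positive since the normalised \<open>\<sigma>\<^sub>i\<close> are hyperbolic points.\<close>
  have ge2: "hyp_pairing \<sigma>1 \<sigma>2 / sqrt (d1 * d2) \<ge> 2"
    using hyp_pairing_ge_2[OF hyp_point_normalize[OF s1 pd1] hyp_point_normalize[OF s2 pd2]] d
    unfolding d1_d2_l1_l2_def by (simp add: hyp_pairing_normalize)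
  have "sqrt (d1 * d2) > 0" using d by simp
  hence "hyp_pairing \<sigma>1 \<sigma>2 > 0" using ge2 by (smt (verit) divide_nonpos_pos)
  hence "l1 + l2 > 0" unfolding sum using d by simp
  moreover have "l1 * l2 > 0" unfolding prod using d by simp
  ultimately have l1: "l1 > 0" by (smt (verit) mult_nonpos_nonneg mult_nonneg_nonpos)
  have root: "sqrt (d1 * d2) = d1 * sqrt (l1 * l2)"
    using d unfolding prod by (simp add: real_sqrt_mult real_sqrt_divide field_simps)
  have "hyp_pairing \<sigma>1 \<sigma>2 / sqrt (d1 * d2) = (l1 + l2) / sqrt (l1 * l2)"
    and "(d1 + d2) / sqrt (d1 * d2) = (1 + l1 * l2) / sqrt (l1 * l2)"
    unfolding root sum prod using d by (simp_all add: field_simps)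
  thus ?thesis
    using exp_dist_eigen_formula[OF l1 le] unfolding d1_d2_l1_l2_def by simp
qed

theorem mainTheorem13:
  fixes \<sigma>1 \<sigma>2 :: "real^2^2"
  assumes pd1: "pos_def (sym_part \<sigma>1)"
      and pd2: "pos_def (sym_part \<sigma>2)"
  defines "d1 \<equiv> det (sym_part \<sigma>1)"
      and "d2 \<equiv> det (sym_part \<sigma>2)"
  defines "m \<equiv> \<sigma>2$1$1 * \<sigma>1$2$2 + \<sigma>1$1$1 * \<sigma>2$2$2
                 - (1/2) * (\<sigma>2$1$2 + \<sigma>2$2$1) * (\<sigma>1$1$2 + \<sigma>1$2$1)"
      and "n \<equiv> (1 / sqrt (d1 * d2)) * (det \<sigma>1 + det \<sigma>2
                 - (1/2) * (\<sigma>1$2$1 - \<sigma>1$1$2) * (\<sigma>2$2$1 - \<sigma>2$1$2))"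
  shows "Kmin \<sigma>1 \<sigma>2 \<in> Kvals \<sigma>1 \<sigma>2
       \<and> Kmin \<sigma>1 \<sigma>2 = sqrt ((m + sqrt (m^2 - 4 * d1 * d2)) / (2 * sqrt (d1 * d2))
                               * ((n + sqrt (n^2 - 4)) / 2))
       \<and> (symmetric_mat \<sigma>1 \<and> symmetric_mat \<sigma>2 \<longrightarrow>
           (let S = pd_sqrt (matrix_inv \<sigma>1); P = S ** \<sigma>2 ** S in
            Kmin \<sigma>1 \<sigma>2 = max (1 / sqrt (lambda_min P)) (sqrt (lambda_max P))))"
proof -
  have d: "d1 > 0" "d2 > 0" unfolding d1_def d2_def using pd1 pd2 by (simp_all add: det_sym_part_pos)
  have m_eq: "m = hyp_pairing (sym_part \<sigma>1) (sym_part \<sigma>2)"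
    unfolding m_def hyp_pairing_def by (simp add: algebra_simps)
  have "hyp_pairing (Gmat \<sigma>1) (Gmat \<sigma>2) = m / sqrt (d1 * d2)"
    unfolding m_eq d1_def d2_def by (rule hyp_pairing_Gmat[OF pd1 pd2])
  moreover have "hyp_pairing (Hmat \<sigma>1) (Hmat \<sigma>2) = n"
    unfolding n_def d1_def d2_def using hyp_pairing_Hmat[OF pd1 pd2] by simp
  ultimately have K: "Kmin \<sigma>1 \<sigma>2 = sqrt (exp_dist (m / sqrt (d1 * d2)) * exp_dist n)"
    using Kmin_hyperbolic(2)[OF pd1 pd2] by simp
  have symmetric: "Kmin \<sigma>1 \<sigma>2 = max (1 / sqrt (lambda_min P)) (sqrt (lambda_max P))"
    if s: "symmetric_mat \<sigma>1" "symmetric_mat \<sigma>2"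
      and P: "P = pd_sqrt (matrix_inv \<sigma>1) ** \<sigma>2 ** pd_sqrt (matrix_inv \<sigma>1)" for P
  proof -
    have sp: "sym_part \<sigma>1 = \<sigma>1" "sym_part \<sigma>2 = \<sigma>2" using s by (simp_all add: sym_part_symmetric)
    have "n = (det \<sigma>1 + det \<sigma>2) / sqrt (det \<sigma>1 * det \<sigma>2)"
      using s unfolding n_def d1_def d2_def sp by (simp add: symmetric_mat_iff)
    thus ?thesis
      using K symmetric_case[OF s pd1[unfolded sp(1)] pd2[unfolded sp(2)], folded P]
      unfolding m_eq d1_def d2_def sp by simp
  qed
  show ?thesis
    using Kmin_hyperbolic(1)[OF pd1 pd2] K symmetric
    unfolding exp_dist_scaled[OF d] exp_dist_def[of n] Let_def by simp
qed

end
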